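(* Let $H^2\times H^2$ carry the product metric $\rho(\mathsf z,\mathsf w)=\sqrt{d_H(z_1,w_1)^2+d_H(z_2,w_2)^2}$ and for $\mathsf z,\mathsf w$ let $E(\mathsf z,\mathsf w)=\{\mathsf x:\rho(\mathsf x,\mathsf z)=\rho(\mathsf x,\mathsf w)\}$. Let $\gamma=(g_1,g_2)$, acting by $(z_1,z_2)\mapsto(g_1(z_1),g_2(z_2))$, where $g_1,g_2\in\mathrm{PSL}(2,\mathbb R)$ are both hyperbolic isometries of $H^2$. Let $\mathsf z=(z_1,z_2)$ where $z_i$ lies on the invariant axis of $g_i$ for $i=1,2$. Then $E(\mathsf z,\gamma(\mathsf z))$ and $E(\mathsf z,\gamma^{-1}(\mathsf z))$ are disjoint. In particular, the Dirichlet domain for the cyclic group $\langle\gamma\rangle$ with basepoint $\mathsf z$ is two-faced, i.e. it equals the intersection of the two closed half-spaces containing $\mathsf z$ bounded by $E(\mathsf z,\gamma(\mathsf z))$ and $E(\mathsf z,\gamma^{-1}(\mathsf z))$.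
   Context: A hyperbolic isometry of $H^2$ fixes exactly two ideal boundary points; its invariant axis is the geodesic joining them. The Dirichlet domain for a group $G$ of isometries with basepoint $p$ is $\{q:\rho(p,q)\le\rho(p,g(q))\text{ for all } g\in G\setminus\{\mathrm{id}\}\}$, i.e. the intersection over $g\neq \mathrm{id}$ of the closed half-spaces containing $p$ bounded by $E(p,g(p))$. *)

theory Defs
  imports "HOL-Analysis.Analysis"
begin

definition H2 :: "complex set" where
  "H2 = {z. Im z > 0}"

definition dH :: "complex \<Rightarrow> complex \<Rightarrow> real" where
  "dH z w = arcosh (1 + (cmod (z - w))\<^sup>2 / (2 * Im z * Im w))"

section \<open>PSL(2,R) via representative matrices (a,b,c,d), ad - bc = 1\<close>

type_synonym mat2 = "real \<times> real \<times> real \<times> real"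

definition sl2 :: "mat2 \<Rightarrow> bool" where
  "sl2 M = (case M of (a,b,c,d) \<Rightarrow> a*d - b*c = 1)"

definition mob :: "mat2 \<Rightarrow> complex \<Rightarrow> complex" where
  "mob M z = (case M of (a,b,c,d) \<Rightarrow>
      (of_real a * z + of_real b) / (of_real c * z + of_real d))"

definition mat_mult :: "mat2 \<Rightarrow> mat2 \<Rightarrow> mat2" where
  "mat_mult M N = (case M of (a,b,c,d) \<Rightarrow> case N of (e,f,g,h) \<Rightarrow>
      (a*e + b*g, a*f + b*h, c*e + d*g, c*f + d*h))"

definition mat_id :: mat2 where "mat_id = (1,0,0,1)"

definition mat_inv :: "mat2 \<Rightarrow> mat2" where
  "mat_inv M = (case M of (a,b,c,d) \<Rightarrow> (d, -b, -c, a))"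

definition mat_zpow :: "mat2 \<Rightarrow> int \<Rightarrow> mat2" where
  "mat_zpow M n = (if n \<ge> 0 then (mat_mult M ^^ nat n) mat_id
                   else (mat_mult (mat_inv M) ^^ nat (- n)) mat_id)"

definition hyperbolic :: "mat2 \<Rightarrow> bool" where
  "hyperbolic M = (case M of (a,b,c,d) \<Rightarrow> \<bar>a + d\<bar> > 2)"

text \<open>Ideal boundary points: R \<union> {\<infinity>}, with None standing for \<infinity>.\<close>
definition ideal_fixed :: "mat2 \<Rightarrow> real option set" where
  "ideal_fixed M = (case M of (a,b,c,d) \<Rightarrow>
      {Some x | x. c * x\<^sup>2 + (d - a) * x - b = 0 \<and> c * x + d \<noteq> 0}
      \<union> (if c = 0 then {None} else {}))"

definition geodesic_between :: "real option \<Rightarrow> real option \<Rightarrow> complex set" where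
  "geodesic_between p q = {z \<in> H2.
     (case (p, q) of
        (Some x, Some y) \<Rightarrow> cmod (z - of_real ((x + y) / 2)) = \<bar>x - y\<bar> / 2
      | (Some x, None) \<Rightarrow> Re z = x
      | (None, Some y) \<Rightarrow> Re z = y
      | (None, None) \<Rightarrow> False)}"

definition invariant_axis :: "mat2 \<Rightarrow> complex set" where
  "invariant_axis M = \<Union>{geodesic_between p q | p q.
       p \<in> ideal_fixed M \<and> q \<in> ideal_fixed M \<and> p \<noteq> q}"

definition H2H2 :: "(complex \<times> complex) set" where
  "H2H2 = H2 \<times> H2"

definition rho :: "complex \<times> complex \<Rightarrow> complex \<times> complex \<Rightarrow> real" where
  "rho z w = sqrt ((dH (fst z) (fst w))\<^sup>2 + (dH (snd z) (snd w))\<^sup>2)"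

definition bisector :: "complex \<times> complex \<Rightarrow> complex \<times> complex \<Rightarrow> (complex \<times> complex) set" where
  "bisector z w = {x \<in> H2H2. rho x z = rho x w}"

definition halfspace :: "complex \<times> complex \<Rightarrow> complex \<times> complex \<Rightarrow> (complex \<times> complex) set" where
  "halfspace z w = {x \<in> H2H2. rho x z \<le> rho x w}"

definition pact :: "mat2 \<times> mat2 \<Rightarrow> complex \<times> complex \<Rightarrow> complex \<times> complex" where
  "pact g x = (mob (fst g) (fst x), mob (snd g) (snd x))"

definition pinv :: "mat2 \<times> mat2 \<Rightarrow> mat2 \<times> mat2" where
  "pinv g = (mat_inv (fst g), mat_inv (snd g))"

definition cyclic_group :: "mat2 \<times> mat2 \<Rightarrow> (complex \<times> complex \<Rightarrow> complex \<times> complex) set" where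
  "cyclic_group g = {pact (mat_zpow (fst g) n, mat_zpow (snd g) n) | n. True}"

definition dirichlet :: "(complex \<times> complex \<Rightarrow> complex \<times> complex) set \<Rightarrow> complex \<times> complex
                          \<Rightarrow> (complex \<times> complex) set" where
  "dirichlet G p = {q \<in> H2H2. \<forall>h \<in> G. (\<exists>x \<in> H2H2. h x \<noteq> x) \<longrightarrow> rho p q \<le> rho p (h q)}"

end

theory Submission
  imports Defs
begin

text \<open>Conjugate each g_i to a dilation y -> e^(L_i) y with L_i nonzero, so that z_i lies on the
  imaginary axis. Then every q admits constants k >= 1 and a with
  d(q, g_i^n z_i) = arcosh (k cosh (a + n L_i)). Since t -> arcosh (k cosh t)^2 - t^2 is convex,
  the sequence n -> rho(q, gamma^n z)^2 has second differences at least 2 (L_1^2 + L_2^2) > 0.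
  A strictly convex sequence cannot take the same value at -1, 0 and 1, so the two bisectors are
  disjoint; and if its values at 1 and -1 are at least its value at 0, then 0 is a global
  minimum, which by rho(z, gamma^n q) = rho(q, gamma^-n z) puts q in the Dirichlet domain.\<close>

definition mat_det :: "mat2 \<Rightarrow> real" where
  "mat_det M = (case M of (a,b,c,d) \<Rightarrow> a*d - b*c)"

lemma sl2_imp_mat_det_pos: "sl2 M \<Longrightarrow> mat_det M > 0"
  by (cases M) (simp add: sl2_def mat_det_def)

lemma sl2_mat_mult: "sl2 M \<Longrightarrow> sl2 N \<Longrightarrow> sl2 (mat_mult M N)"
  by (cases M, cases N) (auto simp: sl2_def mat_mult_def algebra_simps)

lemma sl2_mat_inv: "sl2 M \<Longrightarrow> sl2 (mat_inv M)"
  by (cases M) (auto simp: sl2_def mat_inv_def algebra_simps)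

lemma sl2_mat_id: "sl2 mat_id"
  by (simp add: sl2_def mat_id_def)

lemma mat_mult_mat_inv: "sl2 M \<Longrightarrow> mat_mult M (mat_inv M) = mat_id"
  by (cases M) (simp add: sl2_def mat_mult_def mat_inv_def mat_id_def algebra_simps)

lemma mat_zpow_0: "mat_zpow M 0 = mat_id"
  by (simp add: mat_zpow_def)

lemma mat_zpow_1: "mat_zpow M 1 = M"
  by (cases M) (simp add: mat_zpow_def mat_mult_def mat_id_def)

lemma mat_zpow_minus_1: "mat_zpow M (-1) = mat_inv M"
  by (cases M) (simp add: mat_zpow_def mat_mult_def mat_id_def mat_inv_def)

lemma sl2_mat_mult_iterate: "sl2 M \<Longrightarrow> sl2 ((mat_mult M ^^ k) mat_id)"
  by (induction k) (simp_all add: sl2_mat_id sl2_mat_mult)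

lemma sl2_mat_zpow: "sl2 M \<Longrightarrow> sl2 (mat_zpow M n)"
  by (simp add: mat_zpow_def sl2_mat_mult_iterate sl2_mat_inv)

lemma dH_commute: "dH z w = dH w z"
  unfolding dH_def by (simp add: norm_minus_commute mult.commute mult.left_commute)

lemma mob_id: "mob mat_id y = y"
  by (simp add: mob_def mat_id_def)

lemma mob_denominator_nonzero:
  assumes "mat_det (a,b,c,d) > 0" "y \<in> H2"
  shows "of_real c * y + of_real d \<noteq> 0"
proof
  assume h: "of_real c * y + of_real d = 0"
  have "Im (of_real c * y + of_real d) = c * Im y" by simp
  with h have "c * Im y = 0" by simp
  with assms(2) have "c = 0" by (simp add: H2_def)
  with h assms(1) show False by (simp add: mat_det_def)
qed

lemma Im_mob:
  assumes "mat_det (a,b,c,d) > 0" "y \<in> H2"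
  shows "Im (mob (a,b,c,d) y) = (a*d - b*c) * Im y / (cmod (of_real c * y + of_real d))\<^sup>2"
proof -
  have "(cmod (of_real c * y + of_real d))\<^sup>2 = (c * Re y + d)^2 + (c * Im y)^2"
    by (simp add: cmod_power2)
  then show ?thesis
    unfolding mob_def by (simp add: Im_divide power2_eq_square algebra_simps)
qed

lemma mob_in_H2:
  assumes "mat_det M > 0" "y \<in> H2"
  shows "mob M y \<in> H2"
proof (cases M)
  case (fields a b c d)
  with assms Im_mob[of a b c d y] mob_denominator_nonzero[of a b c d y] show ?thesis
    by (simp add: H2_def mat_det_def)
qed

lemma dH_mob:
  assumes "mat_det M > 0" "y \<in> H2" "y' \<in> H2"
  shows "dH (mob M y) (mob M y') = dH y y'"
proof (cases M)
  case (fields a b c d)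
  define \<delta> A B where "\<delta> = a*d - b*c"
    and "A = cmod (of_real c * y + of_real d)" and "B = cmod (of_real c * y' + of_real d)"
  have pos: "\<delta> > 0" "A > 0" "B > 0"
    using assms mob_denominator_nonzero[of a b c d] by (auto simp: fields \<delta>_def A_def B_def mat_det_def)
  have "mob M y - mob M y' =
      of_real \<delta> * (y - y') / ((of_real c * y + of_real d) * (of_real c * y' + of_real d))"
    using assms mob_denominator_nonzero[of a b c d]
    by (simp add: fields mob_def \<delta>_def field_simps)
  then have dist: "cmod (mob M y - mob M y') = \<delta> * cmod (y - y') / (A * B)"
    using pos(1) by (simp add: A_def B_def norm_mult norm_divide del: of_real_diff of_real_mult)
  have Im: "Im (mob M y) = \<delta> * Im y / A^2" "Im (mob M y') = \<delta> * Im y' / B^2"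
    using Im_mob[of a b c d] assms by (simp_all add: fields \<delta>_def A_def B_def)
  have "(cmod (mob M y - mob M y'))\<^sup>2 / (2 * Im (mob M y) * Im (mob M y'))
      = (cmod (y - y'))\<^sup>2 / (2 * Im y * Im y')"
    unfolding dist Im using pos by (simp add: field_simps power2_eq_square)
  then show ?thesis
    unfolding dH_def by simp
qed

lemma mob_mat_mult:
  assumes "sl2 N" "y \<in> H2"
  shows "mob (mat_mult M N) y = mob M (mob N y)"
proof -
  obtain a b c d where M: "M = (a,b,c,d)" by (cases M)
  obtain e f g h where N: "N = (e,f,g,h)" by (cases N)
  define u v where "u = of_real e * y + of_real f" and "v = of_real g * y + of_real h"
  have "v \<noteq> 0"
    using mob_denominator_nonzero[of e f g h y] assms sl2_imp_mat_det_pos by (simp add: N v_def)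
  then have "of_real a * (u / v) + of_real b = (of_real a * u + of_real b * v) / v"
    and "of_real c * (u / v) + of_real d = (of_real c * u + of_real d * v) / v"
    by (simp_all add: field_simps)
  with \<open>v \<noteq> 0\<close> have "mob M (mob N y) = (of_real a * u + of_real b * v) / (of_real c * u + of_real d * v)"
    by (simp add: M N mob_def u_def[symmetric] v_def[symmetric])
  also have "\<dots> = mob (mat_mult M N) y"
    by (simp add: M N mob_def mat_mult_def u_def v_def algebra_simps)
  finally show ?thesis by simp
qed

lemma hyperbolic_diagonal_ne:
  assumes "sl2 (a,b,0,d)" "hyperbolic (a,b,0,d)"
  shows "a \<noteq> d"
proof
  assume "a = d"
  with assms have "a^2 = 1" "\<bar>a + a\<bar> > 2"
    by (auto simp: sl2_def hyperbolic_def power2_eq_square)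
  then show False
    unfolding power2_eq_1_iff by auto
qed

lemma invariant_axis_cases:
  assumes g: "sl2 (a,b,c,d)" "hyperbolic (a,b,c,d)" and z: "z \<in> invariant_axis (a,b,c,d)"
  obtains "c = 0" "(d - a) * Re z = b"
  | x1 x2 where "c \<noteq> 0" "x1 < x2" "c*x1^2 + (d-a)*x1 - b = 0" "c*x2^2 + (d-a)*x2 - b = 0"
      "cmod (z - of_real ((x1 + x2) / 2)) = (x2 - x1) / 2"
proof -
  from z obtain p q where pq: "p \<in> ideal_fixed (a,b,c,d)" "q \<in> ideal_fixed (a,b,c,d)" "p \<noteq> q"
    and zpq: "z \<in> geodesic_between p q"
    unfolding invariant_axis_def by blast
  have root: "c*x^2 + (d-a)*x - b = 0" if "Some x \<in> ideal_fixed (a,b,c,d)" for x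
    using that by (simp add: ideal_fixed_def split: if_splits)
  have c0: "c = 0" if "None \<in> ideal_fixed (a,b,c,d)"
    using that by (simp add: ideal_fixed_def split: if_splits)
  show thesis
  proof (cases p; cases q)
    fix x assume "p = None" "q = Some x"
    with pq zpq root c0 show thesis
      by (intro that(1)) (auto simp: geodesic_between_def)
  next
    fix x assume "p = Some x" "q = None"
    with pq zpq root c0 show thesis
      by (intro that(1)) (auto simp: geodesic_between_def)
  next
    fix x1 x2 assume p: "p = Some x1" and q: "q = Some x2"
    with pq root have r: "c*x1^2 + (d-a)*x1 - b = 0" "c*x2^2 + (d-a)*x2 - b = 0" "x1 \<noteq> x2"
      by auto
    have "c \<noteq> 0"
    proof
      assume "c = 0"
      with r have "(d - a) * (x1 - x2) = 0" by (simp add: algebra_simps)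
      with r(3) have "a = d" by simp
      with \<open>c = 0\<close> g hyperbolic_diagonal_ne show False by blast
    qed
    moreover have "cmod (z - of_real ((x1 + x2) / 2)) = \<bar>x1 - x2\<bar> / 2"
      using zpq p q by (simp add: geodesic_between_def)
    ultimately show thesis
      using r that(2)[of x1 x2] that(2)[of x2 x1]
      by (cases "x1 < x2") (auto simp: add.commute abs_minus_commute)
  qed (use pq in auto)
qed

lemma invariant_axis_subset_H2: "invariant_axis M \<subseteq> H2"
  by (auto simp: invariant_axis_def geodesic_between_def)

definition conjugates_to_dilation :: "mat2 \<Rightarrow> mat2 \<Rightarrow> real \<Rightarrow> bool" where
  "conjugates_to_dilation N M L \<longleftrightarrow> (\<forall>y\<in>H2. mob N (mob M y) = of_real (exp L) * mob N y)"

lemma conjugates_to_dilation_mat_id: "conjugates_to_dilation N mat_id 0"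
  by (simp add: conjugates_to_dilation_def mob_id)

lemma conjugates_to_dilation_mat_mult:
  assumes "sl2 M'" "conjugates_to_dilation N M L" "conjugates_to_dilation N M' L'"
  shows "conjugates_to_dilation N (mat_mult M M') (L + L')"
  using assms mob_in_H2[OF sl2_imp_mat_det_pos[OF assms(1)]]
  by (simp add: conjugates_to_dilation_def mob_mat_mult exp_add)

lemma conjugates_to_dilation_mat_inv:
  assumes "sl2 M" "conjugates_to_dilation N M L"
  shows "conjugates_to_dilation N (mat_inv M) (- L)"
  unfolding conjugates_to_dilation_def
proof
  fix y assume y: "y \<in> H2"
  have y': "mob (mat_inv M) y \<in> H2"
    using y sl2_mat_inv[OF assms(1)] by (simp add: mob_in_H2 sl2_imp_mat_det_pos)
  have "mob N y = mob N (mob M (mob (mat_inv M) y))"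
    using y assms(1) by (simp add: mob_mat_mult[symmetric] sl2_mat_inv mat_mult_mat_inv mob_id)
  also have "\<dots> = of_real (exp L) * mob N (mob (mat_inv M) y)"
    using assms(2) y' by (simp add: conjugates_to_dilation_def)
  finally show "mob N (mob (mat_inv M) y) = of_real (exp (- L)) * mob N y"
    by (simp add: exp_minus field_simps)
qed

lemma conjugates_to_dilation_mat_mult_iterate:
  assumes "sl2 M" "conjugates_to_dilation N M L"
  shows "conjugates_to_dilation N ((mat_mult M ^^ k) mat_id) (real k * L)"
proof (induction k)
  case 0
  then show ?case by (simp add: conjugates_to_dilation_mat_id)
next
  case (Suc k)
  then show ?case
    using conjugates_to_dilation_mat_mult[OF sl2_mat_mult_iterate[OF assms(1)] assms(2) Suc]
    by (simp add: algebra_simps)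
qed

lemma conjugates_to_dilation_mat_zpow:
  assumes "sl2 M" "conjugates_to_dilation N M L"
  shows "conjugates_to_dilation N (mat_zpow M n) (of_int n * L)"
proof (cases "n \<ge> 0")
  case True
  then show ?thesis
    using conjugates_to_dilation_mat_mult_iterate[OF assms, of "nat n"] by (simp add: mat_zpow_def)
next
  case False
  then show ?thesis
    using conjugates_to_dilation_mat_mult_iterate[OF sl2_mat_inv[OF assms(1)]
        conjugates_to_dilation_mat_inv[OF assms], of "nat (- n)"]
    by (simp add: mat_zpow_def)
qed

lemma mob_minus_fixed_point:
  assumes "c*x^2 + (d-a)*x - b = 0" "of_real c * y + of_real d \<noteq> 0"
  shows "mob (a,b,c,d) y - of_real x = of_real (a - c*x) * (y - of_real x) / (of_real c * y + of_real d)"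
proof -
  have "of_real b = (of_real (c*x^2 + (d-a)*x) :: complex)"
    using assms(1) by (simp add: algebra_simps)
  with assms(2) show ?thesis
    unfolding mob_def by (simp add: field_simps power2_eq_square)
qed

lemma axis_normal_form_infinite_endpoint:
  assumes g: "sl2 (a,b,0,d)" "hyperbolic (a,b,0,d)" and z: "z \<in> H2" "(d - a) * Re z = b"
  obtains N L w where "mat_det N > 0" "L \<noteq> 0" "w > 0"
    "conjugates_to_dilation N (a,b,0,d) L" "mob N z = \<i> * of_real w"
proof -
  define x where "x = Re z"
  define N :: mat2 where "N = (1, -x, 0, 1)"
  have N: "mob N y = y - of_real x" for y
    by (simp add: N_def mob_def)
  have ad: "a * d = 1"
    using g(1) by (simp add: sl2_def)
  have "a \<noteq> d"
    using hyperbolic_diagonal_ne[OF g] .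
  have "d \<noteq> 0" "a \<noteq> 0"
    using ad by auto
  have "a / d = a * (a * d) / d"
    using ad by simp
  also have "\<dots> = a * a"
    using \<open>d \<noteq> 0\<close> by simp
  finally have "a / d = a * a" .
  have "a * a \<noteq> 1"
  proof
    assume "a * a = 1"
    with ad have "a * (a - d) = 0" by (simp add: algebra_simps)
    with \<open>a \<noteq> d\<close> ad show False by simp
  qed
  then have "a / d > 0" "a / d \<noteq> 1"
    using \<open>a / d = a * a\<close> \<open>a \<noteq> 0\<close> by (simp_all add: not_square_less_zero less_le)
  then have L: "exp (ln (a / d)) = a / d" "ln (a / d) \<noteq> 0"
    by auto
  have "conjugates_to_dilation N (a,b,0,d) (ln (a / d))"
    unfolding conjugates_to_dilation_def L(1) N
  proof
    fix y assume "y \<in> H2"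
    show "mob (a,b,0,d) y - of_real x = of_real (a / d) * (y - of_real x)"
      using mob_minus_fixed_point[of 0 x d a b y] z(2) \<open>d \<noteq> 0\<close>
      by (simp add: x_def algebra_simps)
  qed
  moreover have "mob N z = \<i> * of_real (Im z)"
    by (simp add: N x_def complex_eq_iff)
  moreover have "mat_det N > 0" "Im z > 0"
    using z(1) by (simp_all add: N_def mat_det_def H2_def)
  ultimately show thesis
    using that L(2) by blast
qed

lemma fixed_points_multipliers_prod:
  assumes "sl2 (a,b,c,d)" "c*x1^2 + (d-a)*x1 - b = 0" "c*x2^2 + (d-a)*x2 - b = 0" "x1 \<noteq> x2"
  shows "(a - c*x1) * (a - c*x2) = 1"
proof -
  have "(x1 - x2) * (c * (x1 + x2) + d - a) = 0"
    using assms(2,3) by (simp add: algebra_simps power2_eq_square)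
  with assms(4) have "c * (x1 + x2) + d - a = 0"
    by simp
  then have "a - c * x2 = c * x1 + d"
    by (simp add: algebra_simps)
  moreover have "(a - c*x1) * (c*x1 + d) = a*d - c*(c*x1^2 + (d-a)*x1)"
    by (simp add: algebra_simps power2_eq_square)
  ultimately show ?thesis
    using assms(1,2) by (simp add: sl2_def mult.commute)
qed

lemma Re_cross_ratio_on_circle:
  assumes "cmod (z - of_real ((x1 + x2) / 2)) = (x2 - x1) / 2"
  shows "Re ((z - of_real x2) / (z - of_real x1)) = 0"
proof -
  have "((x2 - x1) / 2)^2 = (cmod (z - of_real ((x1 + x2) / 2)))^2"
    by (simp only: assms)
  also have "\<dots> = (Re z - (x1 + x2) / 2)^2 + (Im z)^2"
    by (simp only: cmod_power2) simp
  finally have "(Re z - x1) * (Re z - x2) + (Im z)^2 = 0"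
    by (simp add: field_simps power2_eq_square)
  then show ?thesis
    by (simp add: Re_divide algebra_simps power2_eq_square)
qed

lemma axis_normal_form_finite_endpoints:
  assumes g: "sl2 (a,b,c,d)" and "c \<noteq> 0" "x1 < x2"
    and r: "c*x1^2 + (d-a)*x1 - b = 0" "c*x2^2 + (d-a)*x2 - b = 0"
    and z: "z \<in> H2" "cmod (z - of_real ((x1 + x2) / 2)) = (x2 - x1) / 2"
  obtains N L w where "mat_det N > 0" "L \<noteq> 0" "w > 0"
    "conjugates_to_dilation N (a,b,c,d) L" "mob N z = \<i> * of_real w"
proof -
  define N :: mat2 where "N = (1, -x2, 1, -x1)"
  have N: "mob N y = (y - of_real x2) / (y - of_real x1)" for y
    by (simp add: N_def mob_def)
  have detN: "mat_det N > 0"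
    using \<open>x1 < x2\<close> by (simp add: N_def mat_det_def)
  have prod: "(a - c*x1) * (a - c*x2) = 1"
    using fixed_points_multipliers_prod[OF g r] \<open>x1 < x2\<close> by simp
  define \<mu> where "\<mu> = (a - c*x2) / (a - c*x1)"
  have "a - c*x1 \<noteq> 0"
    using prod by auto
  have "\<mu> = (a - c*x2) * inverse (a - c*x1)"
    by (simp add: \<mu>_def divide_inverse)
  then have "\<mu> = (a - c*x2)^2"
    using inverse_unique[OF prod] by (simp add: power2_eq_square)
  moreover have "a - c*x2 \<noteq> 0" "a - c*x2 \<noteq> a - c*x1"
    using prod \<open>c \<noteq> 0\<close> \<open>x1 < x2\<close> by auto
  ultimately have "\<mu> > 0" "\<mu> \<noteq> 1"
    using \<open>a - c*x1 \<noteq> 0\<close> by (auto simp: \<mu>_def)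
  then have L: "exp (ln \<mu>) = \<mu>" "ln \<mu> \<noteq> 0"
    by auto
  have "conjugates_to_dilation N (a,b,c,d) (ln \<mu>)"
    unfolding conjugates_to_dilation_def L(1) N
  proof
    fix y assume y: "y \<in> H2"
    then have "of_real c * y + of_real d \<noteq> 0"
      using g mob_denominator_nonzero sl2_imp_mat_det_pos by blast
    with r have "mob (a,b,c,d) y - of_real x2 = of_real (a - c*x2) * (y - of_real x2) / (of_real c * y + of_real d)"
      and "mob (a,b,c,d) y - of_real x1 = of_real (a - c*x1) * (y - of_real x1) / (of_real c * y + of_real d)"
      by (simp_all add: mob_minus_fixed_point)
    with \<open>of_real c * y + of_real d \<noteq> 0\<close> \<open>a - c*x1 \<noteq> 0\<close>
    show "(mob (a,b,c,d) y - of_real x2) / (mob (a,b,c,d) y - of_real x1)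
        = of_real \<mu> * ((y - of_real x2) / (y - of_real x1))"
      by (simp add: \<mu>_def)
  qed
  moreover have "Re (mob N z) = 0"
    using Re_cross_ratio_on_circle[OF z(2)] by (simp add: N)
  then have "mob N z = \<i> * of_real (Im (mob N z))"
    by (simp add: complex_eq_iff)
  moreover have "Im (mob N z) > 0"
    using mob_in_H2[OF detN z(1)] by (simp add: H2_def)
  ultimately show thesis
    using that detN L(2) by blast
qed

lemma invariant_axis_normal_form:
  assumes "sl2 g" "hyperbolic g" "z \<in> invariant_axis g"
  obtains N L w where "mat_det N > 0" "L \<noteq> 0" "w > 0"
    "conjugates_to_dilation N g L" "mob N z = \<i> * of_real w"
proof (cases g)
  case (fields a b c d)
  have "z \<in> H2"
    using assms(3) invariant_axis_subset_H2 by blast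
  note g = assms(1,2)[unfolded fields] and that = that[unfolded fields]
  from g assms(3)[unfolded fields] show thesis
  proof (cases rule: invariant_axis_cases)
    case 1
    with g have "sl2 (a,b,0,d)" "hyperbolic (a,b,0,d)"
      by simp_all
    from axis_normal_form_infinite_endpoint[OF this \<open>z \<in> H2\<close> 1(2)] that 1(1)
    show thesis by blast
  next
    case (2 x1 x2)
    from axis_normal_form_finite_endpoints[OF g(1) 2(1-4) \<open>z \<in> H2\<close> 2(5)] that
    show thesis by blast
  qed
qed

lemma dH_mult_of_real:
  assumes "r > 0"
  shows "dH (of_real r * y) (of_real r * y') = dH y y'"
proof -
  have "cmod (of_real r * y - of_real r * y') = r * cmod (y - y')"
    using assms by (simp add: right_diff_distrib[symmetric] norm_mult)
  then have "(cmod (of_real r * y - of_real r * y'))\<^sup>2 / (2 * Im (of_real r * y) * Im (of_real r * y'))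
     = (cmod (y - y'))\<^sup>2 / (2 * Im y * Im y')"
    using assms by (simp add: field_simps power2_eq_square)
  then show ?thesis
    unfolding dH_def by simp
qed

lemma dH_imaginary_axis:
  assumes "Y \<in> H2" "h > 0"
  shows "dH Y (\<i> * of_real h) = arcosh (cmod Y / Im Y * cosh (ln h - ln (cmod Y)))"
proof -
  have v: "Im Y > 0"
    using assms by (simp add: H2_def)
  then have r: "cmod Y > 0"
    using abs_Im_le_cmod[of Y] by linarith
  have cosh: "cosh (ln h - ln (cmod Y)) = (h / cmod Y + cmod Y / h) / 2"
    using r assms(2) by (simp add: cosh_field_def exp_diff exp_minus field_simps)
  have dist: "(cmod (Y - \<i> * of_real h))\<^sup>2 = (Re Y)^2 + (Im Y - h)^2"
    by (simp add: cmod_power2)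
  have "1 + (cmod (Y - \<i> * of_real h))\<^sup>2 / (2 * Im Y * Im (\<i> * of_real h))
     = cmod Y / Im Y * cosh (ln h - ln (cmod Y))"
    unfolding cosh dist using v r assms(2) cmod_power2[of Y]
    by (simp add: field_simps power2_eq_square)
  then show ?thesis
    unfolding dH_def by simp
qed

lemma dH_scaled_imaginary_axis:
  assumes "Y \<in> H2" "r > 0" "h > 0"
  shows "dH (of_real r * Y) (\<i> * of_real h) = arcosh (cmod Y / Im Y * cosh (ln h - ln r - ln (cmod Y)))"
proof -
  have "dH (of_real r * Y) (\<i> * of_real h) = dH Y (\<i> * of_real (h / r))"
    using dH_mult_of_real[of "1 / r" "of_real r * Y" "\<i> * of_real h"] assms(2) by simp
  also have "\<dots> = arcosh (cmod Y / Im Y * cosh (ln h - ln r - ln (cmod Y)))"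
    using dH_imaginary_axis[OF assms(1), of "h / r"] assms(2,3) by (simp add: ln_div)
  finally show ?thesis .
qed

lemma conjugates_to_dilation_orbit_dH:
  assumes N: "mat_det N > 0" "conjugates_to_dilation N g L" "mob N z = \<i> * of_real w"
    and "sl2 g" "w > 0" "z \<in> H2" "q \<in> H2"
  obtains k a where "k \<ge> 1"
    "\<And>n. dH q (mob (mat_zpow g n) z) = arcosh (k * cosh (a + of_int n * L))"
    "\<And>n. dH z (mob (mat_zpow g n) q) = arcosh (k * cosh (a - of_int n * L))"
proof
  \<comment> \<open>\<open>k = cosh\<close> of the distance from \<open>q\<close> to the axis; \<open>a\<close> is the signed distance from the
    foot of the perpendicular to \<open>z\<close>.\<close>
  define Y where "Y = mob N q"
  have Y: "Y \<in> H2"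
    unfolding Y_def using N(1) \<open>q \<in> H2\<close> by (rule mob_in_H2)
  then show "cmod Y / Im Y \<ge> 1"
    using abs_Im_le_cmod[of Y] by (simp add: H2_def)
  fix n :: int
  have orbit: "mob (mat_zpow g n) y \<in> H2" "mob N (mob (mat_zpow g n) y) = of_real (exp (of_int n * L)) * mob N y"
    if "y \<in> H2" for y
    using that conjugates_to_dilation_mat_zpow[OF \<open>sl2 g\<close> N(2), of n] \<open>sl2 g\<close>
    by (simp_all add: mob_in_H2 sl2_imp_mat_det_pos sl2_mat_zpow conjugates_to_dilation_def)
  have "dH q (mob (mat_zpow g n) z) = dH Y (\<i> * of_real (w * exp (of_int n * L)))"
    using dH_mob[OF N(1) \<open>q \<in> H2\<close> orbit(1)[OF \<open>z \<in> H2\<close>]] orbit(2)[OF \<open>z \<in> H2\<close>] N(3)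
    by (simp add: Y_def algebra_simps)
  also have "\<dots> = arcosh (cmod Y / Im Y * cosh (ln w - ln (cmod Y) + of_int n * L))"
    using dH_imaginary_axis[OF Y, of "w * exp (of_int n * L)"] \<open>w > 0\<close> by (simp add: ln_mult algebra_simps)
  finally show "dH q (mob (mat_zpow g n) z) = arcosh (cmod Y / Im Y * cosh (ln w - ln (cmod Y) + of_int n * L))" .
  have "dH z (mob (mat_zpow g n) q) = dH (of_real (exp (of_int n * L)) * Y) (\<i> * of_real w)"
    using dH_mob[OF N(1) \<open>z \<in> H2\<close> orbit(1)[OF \<open>q \<in> H2\<close>]] orbit(2)[OF \<open>q \<in> H2\<close>] N(3)
    by (simp add: Y_def dH_commute)
  also have "\<dots> = arcosh (cmod Y / Im Y * cosh (ln w - ln (cmod Y) - of_int n * L))"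
    using dH_scaled_imaginary_axis[OF Y, of "exp (of_int n * L)" w] \<open>w > 0\<close> by (simp add: algebra_simps)
  finally show "dH z (mob (mat_zpow g n) q) = arcosh (cmod Y / Im Y * cosh (ln w - ln (cmod Y) - of_int n * L))" .
qed

lemma sinh_le_mult_cosh:
  fixes x :: real
  assumes "x \<ge> 0"
  shows "sinh x \<le> x * cosh x"
proof -
  have "(\<lambda>t. t * cosh t - sinh t) 0 \<le> (\<lambda>t. t * cosh t - sinh t) x"
  proof (rule DERIV_nonneg_imp_nondecreasing[OF assms])
    fix t :: real assume "0 \<le> t" "t \<le> x"
    then have "t * sinh t \<ge> 0" by simp
    moreover have "((\<lambda>t. t * cosh t - sinh t) has_real_derivative t * sinh t) (at t)"
      by (auto intro!: derivative_eq_intros)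
    ultimately show "\<exists>y. ((\<lambda>t. t * cosh t - sinh t) has_real_derivative y) (at t) \<and> 0 \<le> y"
      by blast
  qed
  then show ?thesis by simp
qed

lemma arcosh_cosh_square: "(arcosh (cosh x))\<^sup>2 = (x::real)\<^sup>2"
  using arcosh_cosh_real[of "\<bar>x\<bar>"] by simp

lemma mult_sinh_square: "(k * sinh t)\<^sup>2 = (k * cosh t)\<^sup>2 - (k::real)\<^sup>2"
  by (simp add: power_mult_distrib sinh_square_eq right_diff_distrib)

context
  fixes k :: real
  assumes k: "k > 1"
begin

lemma mult_cosh_gt_1: "k * cosh t > 1"
proof -
  have "k * 1 \<le> k * cosh t"
    using k cosh_real_ge_1[of t] by (intro mult_left_mono) auto
  with k show ?thesis by linarith
qed

lemma DERIV_arcosh_mult_cosh: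
  "((\<lambda>t. arcosh (k * cosh t)) has_real_derivative k * sinh t / sqrt ((k * cosh t)\<^sup>2 - 1)) (at t)"
proof -
  have "((\<lambda>t. arcosh (k * cosh t)) has_real_derivative
      1 / sqrt ((k * cosh t)\<^sup>2 - 1) * (k * sinh t)) (at t)"
    by (rule DERIV_chain2[where f = arcosh])
      (auto intro!: derivative_eq_intros arcosh_real_has_field_derivative mult_cosh_gt_1)
  then show ?thesis
    by simp
qed

lemma DERIV_mult_sinh_div:
  "((\<lambda>t. k * sinh t / sqrt ((k * cosh t)\<^sup>2 - 1)) has_real_derivative
     (k\<^sup>2 - 1) * k * cosh t / sqrt ((k * cosh t)\<^sup>2 - 1) ^ 3) (at t)"
proof -
  define S where "S = sqrt ((k * cosh t)\<^sup>2 - 1)"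
  have S: "S > 0" "S\<^sup>2 = (k * cosh t)\<^sup>2 - 1"
    using mult_cosh_gt_1[of t] by (simp_all add: S_def)
  have "((\<lambda>t. sqrt ((k * cosh t)\<^sup>2 - 1)) has_real_derivative
      inverse S / 2 * (2 * (k * cosh t) * (k * sinh t))) (at t)"
    unfolding S_def
    by (rule DERIV_chain2[where f = sqrt])
      (auto intro!: derivative_eq_intros DERIV_real_sqrt simp: mult_cosh_gt_1)
  from DERIV_divide[OF _ this, of "\<lambda>t. k * sinh t" "k * cosh t"]
  have "((\<lambda>t. k * sinh t / sqrt ((k * cosh t)\<^sup>2 - 1)) has_real_derivative
      (k * cosh t * S - k * sinh t * (inverse S / 2 * (2 * (k * cosh t) * (k * sinh t)))) / (S * S)) (at t)"
    using S(1) by (auto intro!: derivative_eq_intros simp: S_def)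
  moreover have "(k * cosh t * S - k * sinh t * (inverse S / 2 * (2 * (k * cosh t) * (k * sinh t)))) / (S * S)
      = (k\<^sup>2 - 1) * k * cosh t / S ^ 3"
  proof -
    have sinh: "S\<^sup>2 - k\<^sup>2 * (sinh t)\<^sup>2 = k\<^sup>2 - 1"
      using S(2) mult_sinh_square[of k t] by (simp add: power_mult_distrib)
    have "k * cosh t * S - k * sinh t * (inverse S / 2 * (2 * (k * cosh t) * (k * sinh t)))
        = k * cosh t * (S\<^sup>2 - k\<^sup>2 * (sinh t)\<^sup>2) / S"
      using S(1) by (simp add: field_simps power2_eq_square)
    then show ?thesis
      unfolding sinh using S(1) by (simp add: field_simps power2_eq_square power3_eq_cube)
  qed
  ultimately show ?thesis
    by (simp add: S_def)
qed

lemma arcosh_mult_cosh_half_derivative_mono: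
  assumes "x \<le> y"
  shows "arcosh (k * cosh x) * (k * sinh x / sqrt ((k * cosh x)\<^sup>2 - 1)) - x
    \<le> arcosh (k * cosh y) * (k * sinh y / sqrt ((k * cosh y)\<^sup>2 - 1)) - y"
proof (rule DERIV_nonneg_imp_nondecreasing[OF assms])
  fix t
  define S A where "S = sqrt ((k * cosh t)\<^sup>2 - 1)" and "A = arcosh (k * cosh t)"
  have S: "S > 0" "S\<^sup>2 = (k * cosh t)\<^sup>2 - 1"
    using mult_cosh_gt_1[of t] by (simp_all add: S_def)
  have "S = sinh A" "k * cosh t = cosh A" "A \<ge> 0"
    using mult_cosh_gt_1[of t] by (simp_all add: A_def S_def sinh_arcosh_real)
  then have "S \<le> A * (k * cosh t)"
    using sinh_le_mult_cosh by simp
  moreover have "k\<^sup>2 - 1 > 0"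
    using k by (simp add: one_less_power)
  ultimately have "(k\<^sup>2 - 1) * S / S ^ 3 \<le> (k\<^sup>2 - 1) * (A * (k * cosh t)) / S ^ 3"
    using S(1) by (intro divide_right_mono mult_left_mono) auto
  then have "(k\<^sup>2 - 1) / S\<^sup>2 \<le> A * ((k\<^sup>2 - 1) * k * cosh t / S ^ 3)"
    using S(1) by (simp add: power2_eq_square power3_eq_cube mult_ac)
  moreover have "(k * sinh t / S)\<^sup>2 - 1 = - ((k\<^sup>2 - 1) / S\<^sup>2)"
  proof -
    have "(k * sinh t)\<^sup>2 = S\<^sup>2 + 1 - k\<^sup>2"
      using S(2) mult_sinh_square[of k t] by simp
    then have "(k * sinh t / S)\<^sup>2 = (S\<^sup>2 + 1 - k\<^sup>2) / S\<^sup>2"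
      by (simp only: power_divide)
    then show ?thesis
      using S(1) by (simp only:) (simp add: field_simps)
  qed
  ultimately have "0 \<le> (k * sinh t / S)\<^sup>2 + A * ((k\<^sup>2 - 1) * k * cosh t / S ^ 3) - 1"
    by linarith
  moreover have "((\<lambda>t. arcosh (k * cosh t) * (k * sinh t / sqrt ((k * cosh t)\<^sup>2 - 1)) - t)
      has_real_derivative (k * sinh t / S)\<^sup>2 + A * ((k\<^sup>2 - 1) * k * cosh t / S ^ 3) - 1) (at t)"
    unfolding A_def S_def
    by (rule DERIV_cong[OF DERIV_diff[OF DERIV_mult[OF DERIV_arcosh_mult_cosh DERIV_mult_sinh_div]
          DERIV_ident]]) (simp add: power2_eq_square)
  ultimately show "\<exists>D. ((\<lambda>t. arcosh (k * cosh t) * (k * sinh t / sqrt ((k * cosh t)\<^sup>2 - 1)) - t)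
      has_real_derivative D) (at t) \<and> 0 \<le> D"
    by blast
qed

lemma convex_on_arcosh_mult_cosh_sq_diff:
  "convex_on UNIV (\<lambda>t. (arcosh (k * cosh t))\<^sup>2 - t\<^sup>2)"
proof (rule convex_on_realI[where
      f' = "\<lambda>t. 2 * (arcosh (k * cosh t) * (k * sinh t / sqrt ((k * cosh t)\<^sup>2 - 1)) - t)"])
  fix t
  show "((\<lambda>t. (arcosh (k * cosh t))\<^sup>2 - t\<^sup>2) has_real_derivative
      2 * (arcosh (k * cosh t) * (k * sinh t / sqrt ((k * cosh t)\<^sup>2 - 1)) - t)) (at t)"
    by (auto intro!: derivative_eq_intros DERIV_arcosh_mult_cosh simp: algebra_simps)
next
  fix x y :: real
  assume "x \<le> y"
  then show "2 * (arcosh (k * cosh x) * (k * sinh x / sqrt ((k * cosh x)\<^sup>2 - 1)) - x)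
      \<le> 2 * (arcosh (k * cosh y) * (k * sinh y / sqrt ((k * cosh y)\<^sup>2 - 1)) - y)"
    by (intro mult_left_mono arcosh_mult_cosh_half_derivative_mono) simp_all
qed simp

end

lemma arcosh_mult_cosh_sq_midpoint:
  fixes k t L :: real
  assumes "k \<ge> 1"
  shows "2 * (arcosh (k * cosh t))\<^sup>2 + 2 * L\<^sup>2
    \<le> (arcosh (k * cosh (t + L)))\<^sup>2 + (arcosh (k * cosh (t - L)))\<^sup>2"
proof -
  define G where "G t = (arcosh (k * cosh t))\<^sup>2 - t\<^sup>2" for t
  have "convex_on UNIV G"
  proof (cases "k = 1")
    case True
    then have "G = (\<lambda>_. 0)"
      by (simp add: fun_eq_iff G_def arcosh_cosh_square)
    then show ?thesis
      by (simp add: convex_on_const)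
  next
    case False
    with assms show ?thesis
      unfolding G_def by (intro convex_on_arcosh_mult_cosh_sq_diff) simp
  qed
  then have "G ((1 - 1/2) *\<^sub>R (t - L) + (1/2) *\<^sub>R (t + L)) \<le> (1 - 1/2) * G (t - L) + (1/2) * G (t + L)"
    by (rule convex_onD) auto
  then show ?thesis
    by (simp add: G_def field_simps power2_eq_square)
qed

context
  fixes g :: mat2 and z :: complex
  assumes g: "sl2 g" "hyperbolic g" and z: "z \<in> invariant_axis g"
begin

lemma axis_in_H2: "z \<in> H2"
  using z invariant_axis_subset_H2 by blast

lemma axis_orbit_dH:
  assumes "q \<in> H2"
  obtains L k a where "L \<noteq> 0" "k \<ge> 1"
    "\<And>n. dH q (mob (mat_zpow g n) z) = arcosh (k * cosh (a + of_int n * L))"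
    "\<And>n. dH z (mob (mat_zpow g n) q) = arcosh (k * cosh (a - of_int n * L))"
proof -
  obtain N L w where N: "mat_det N > 0" "L \<noteq> 0" "w > 0"
    "conjugates_to_dilation N g L" "mob N z = \<i> * of_real w"
    using invariant_axis_normal_form[OF g z] .
  show thesis
  proof (rule conjugates_to_dilation_orbit_dH[OF N(1,4,5) g(1) N(3) axis_in_H2 assms])
    fix k a assume "k \<ge> 1"
      "\<And>n. dH q (mob (mat_zpow g n) z) = arcosh (k * cosh (a + of_int n * L))"
      "\<And>n. dH z (mob (mat_zpow g n) q) = arcosh (k * cosh (a - of_int n * L))"
    with N(2) show thesis
      by (rule that)
  qed
qed

lemma axis_orbit_dH_sq_strict_midpoint:
  assumes "q \<in> H2"
  shows "2 * (dH q (mob (mat_zpow g n) z))\<^sup>2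
    < (dH q (mob (mat_zpow g (n + 1)) z))\<^sup>2 + (dH q (mob (mat_zpow g (n - 1)) z))\<^sup>2"
proof (rule axis_orbit_dH[OF assms])
  fix L k a assume "L \<noteq> 0" "k \<ge> 1"
    and d: "\<And>n. dH q (mob (mat_zpow g n) z) = arcosh (k * cosh (a + of_int n * L))"
  have shift: "a + of_int (n + 1) * L = (a + of_int n * L) + L"
    "a + of_int (n - 1) * L = (a + of_int n * L) - L"
    by (simp_all add: algebra_simps)
  have "L\<^sup>2 > 0"
    using \<open>L \<noteq> 0\<close> by simp
  with arcosh_mult_cosh_sq_midpoint[OF \<open>k \<ge> 1\<close>, of "a + of_int n * L" L]
  show ?thesis
    unfolding d shift by linarith
qed

lemma dH_axis_orbit_swap:
  assumes "q \<in> H2"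
  shows "dH z (mob (mat_zpow g n) q) = dH q (mob (mat_zpow g (- n)) z)"
proof (rule axis_orbit_dH[OF assms])
  fix L k a assume
    "\<And>n. dH q (mob (mat_zpow g n) z) = arcosh (k * cosh (a + of_int n * L))"
    "\<And>n. dH z (mob (mat_zpow g n) q) = arcosh (k * cosh (a - of_int n * L))"
  then show ?thesis
    by simp
qed

lemma mob_mat_zpow_axis_ne:
  assumes "n \<noteq> 0"
  shows "mob (mat_zpow g n) z \<noteq> z"
proof
  obtain N L w where N: "mat_det N > 0" "L \<noteq> 0" "w > 0"
    "conjugates_to_dilation N g L" "mob N z = \<i> * of_real w"
    using invariant_axis_normal_form[OF g z] .
  assume "mob (mat_zpow g n) z = z"
  with conjugates_to_dilation_mat_zpow[OF g(1) N(4), of n] axis_in_H2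
  have "mob N z = of_real (exp (of_int n * L)) * mob N z"
    by (auto simp: conjugates_to_dilation_def)
  with N(2,3,5) assms show False
    by (simp add: complex_eq_iff)
qed

end

lemma int_midpoint_convex_nonneg_ge:
  fixes f :: "int \<Rightarrow> real"
  assumes convex: "\<And>n. 2 * f n \<le> f (n + 1) + f (n - 1)" and "f 0 \<le> f 1"
  shows "f 0 \<le> f (int k) \<and> f (int k) \<le> f (int k + 1)"
proof (induction k)
  case 0
  with \<open>f 0 \<le> f 1\<close> show ?case by simp
next
  case (Suc k)
  have "2 * f (int k + 1) \<le> f (int k + 2) + f (int k)"
    using convex[of "int k + 1"] by (simp add: add.assoc)
  with Suc show ?case
    by (simp add: ac_simps)
qed

lemma int_midpoint_convex_ge:
  fixes f :: "int \<Rightarrow> real"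
  assumes convex: "\<And>n. 2 * f n \<le> f (n + 1) + f (n - 1)" and "f 0 \<le> f 1" "f 0 \<le> f (- 1)"
  shows "f 0 \<le> f m"
proof (cases "m \<ge> 0")
  case True
  then show ?thesis
    using int_midpoint_convex_nonneg_ge[OF convex \<open>f 0 \<le> f 1\<close>, of "nat m"] by simp
next
  case False
  have "2 * f (- n) \<le> f (- (n + 1)) + f (- (n - 1))" for n
  proof -
    have "- (n + 1) = - n - 1" "- (n - 1) = - n + 1"
      by simp_all
    with convex[of "- n"] show ?thesis
      by (simp only: add.commute)
  qed
  from int_midpoint_convex_nonneg_ge[of "\<lambda>n. f (- n)", OF this, of "nat (- m)"] \<open>f 0 \<le> f (- 1)\<close> False
  show ?thesis by simp
qed

definition pair_zpow :: "mat2 \<times> mat2 \<Rightarrow> int \<Rightarrow> mat2 \<times> mat2" where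
  "pair_zpow \<gamma> n = (mat_zpow (fst \<gamma>) n, mat_zpow (snd \<gamma>) n)"

lemma cyclic_group_eq_range: "cyclic_group \<gamma> = range (\<lambda>n. pact (pair_zpow \<gamma> n))"
  by (auto simp: cyclic_group_def pair_zpow_def)

lemma pair_zpow_1: "pair_zpow \<gamma> 1 = \<gamma>"
  by (simp add: pair_zpow_def mat_zpow_1)

lemma pair_zpow_minus_1: "pair_zpow \<gamma> (- 1) = pinv \<gamma>"
  by (simp add: pair_zpow_def pinv_def mat_zpow_minus_1)

lemma pact_pair_zpow_0: "pact (pair_zpow \<gamma> 0) x = x"
  by (simp add: pact_def pair_zpow_def mat_zpow_0 mob_id)

lemma rho_commute: "rho x y = rho y x"
  by (simp add: rho_def dH_commute)

lemma rho_square: "(rho x y)\<^sup>2 = (dH (fst x) (fst y))\<^sup>2 + (dH (snd x) (snd y))\<^sup>2"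
  by (simp add: rho_def)

lemma rho_le_iff_square_le: "rho x y \<le> rho x' y' \<longleftrightarrow> (rho x y)\<^sup>2 \<le> (rho x' y')\<^sup>2"
  by (simp add: rho_def)

context
  fixes g1 g2 :: mat2 and z1 z2 :: complex
  assumes g: "sl2 g1" "sl2 g2" "hyperbolic g1" "hyperbolic g2"
    and z: "z1 \<in> invariant_axis g1" "z2 \<in> invariant_axis g2"
begin

lemma axis_pair_in_H2H2: "(z1, z2) \<in> H2H2"
  using axis_in_H2[OF g(1,3) z(1)] axis_in_H2[OF g(2,4) z(2)] by (simp add: H2H2_def)

lemma pact_pair_zpow_axis_ne:
  "n \<noteq> 0 \<Longrightarrow> pact (pair_zpow (g1, g2) n) (z1, z2) \<noteq> (z1, z2)"
  using mob_mat_zpow_axis_ne[OF g(1,3) z(1)] by (simp add: pact_def pair_zpow_def)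

lemma rho_orbit_sq_strict_midpoint:
  assumes "q \<in> H2H2"
  shows "2 * (rho q (pact (pair_zpow (g1, g2) n) (z1, z2)))\<^sup>2
    < (rho q (pact (pair_zpow (g1, g2) (n + 1)) (z1, z2)))\<^sup>2
      + (rho q (pact (pair_zpow (g1, g2) (n - 1)) (z1, z2)))\<^sup>2"
  using axis_orbit_dH_sq_strict_midpoint[OF g(1,3) z(1), of "fst q" n]
    axis_orbit_dH_sq_strict_midpoint[OF g(2,4) z(2), of "snd q" n] assms
  by (auto simp: rho_square pact_def pair_zpow_def H2H2_def)

lemma rho_orbit_swap:
  assumes "q \<in> H2H2"
  shows "rho (z1, z2) (pact (pair_zpow (g1, g2) n) q) = rho q (pact (pair_zpow (g1, g2) (- n)) (z1, z2))"
  using dH_axis_orbit_swap[OF g(1,3) z(1), of "fst q" n] dH_axis_orbit_swap[OF g(2,4) z(2), of "snd q" n] assms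
  by (auto simp: rho_def pact_def pair_zpow_def H2H2_def)

lemma bisectors_disjoint:
  "bisector (z1, z2) (pact (g1, g2) (z1, z2)) \<inter> bisector (z1, z2) (pact (pinv (g1, g2)) (z1, z2)) = {}"
proof (intro equals0I)
  fix q
  assume "q \<in> bisector (z1, z2) (pact (g1, g2) (z1, z2)) \<inter> bisector (z1, z2) (pact (pinv (g1, g2)) (z1, z2))"
  then have "q \<in> H2H2"
    and "rho q (pact (pair_zpow (g1, g2) 0) (z1, z2)) = rho q (pact (pair_zpow (g1, g2) (0 + 1)) (z1, z2))"
    and "rho q (pact (pair_zpow (g1, g2) 0) (z1, z2)) = rho q (pact (pair_zpow (g1, g2) (0 - 1)) (z1, z2))"
    by (simp_all add: bisector_def pact_pair_zpow_0 pair_zpow_1 pair_zpow_minus_1)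
  with rho_orbit_sq_strict_midpoint[of q 0] show False
    by simp
qed

lemma dirichlet_cyclic_group_eq:
  "dirichlet (cyclic_group (g1, g2)) (z1, z2)
    = halfspace (z1, z2) (pact (g1, g2) (z1, z2)) \<inter> halfspace (z1, z2) (pact (pinv (g1, g2)) (z1, z2))"
proof (intro set_eqI iffI)
  fix q
  assume q: "q \<in> dirichlet (cyclic_group (g1, g2)) (z1, z2)"
  have "rho q (z1, z2) \<le> rho q (pact (pair_zpow (g1, g2) (- n)) (z1, z2))" if "n \<noteq> 0" for n
  proof -
    have "pact (pair_zpow (g1, g2) n) \<in> cyclic_group (g1, g2)"
      by (simp add: cyclic_group_eq_range)
    moreover have "\<exists>x\<in>H2H2. pact (pair_zpow (g1, g2) n) x \<noteq> x"
      using axis_pair_in_H2H2 pact_pair_zpow_axis_ne[OF that] by blast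
    ultimately have "rho (z1, z2) q \<le> rho (z1, z2) (pact (pair_zpow (g1, g2) n) q)"
      using q by (simp add: dirichlet_def)
    with q show ?thesis
      by (simp add: rho_orbit_swap dirichlet_def rho_commute)
  qed
  from this[of "-1"] this[of 1] q
  show "q \<in> halfspace (z1, z2) (pact (g1, g2) (z1, z2)) \<inter> halfspace (z1, z2) (pact (pinv (g1, g2)) (z1, z2))"
    by (simp add: halfspace_def dirichlet_def pair_zpow_1 pair_zpow_minus_1)
next
  fix q
  assume q: "q \<in> halfspace (z1, z2) (pact (g1, g2) (z1, z2)) \<inter> halfspace (z1, z2) (pact (pinv (g1, g2)) (z1, z2))"
  define f where "f n = (rho q (pact (pair_zpow (g1, g2) n) (z1, z2)))\<^sup>2" for n
  have "q \<in> H2H2"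
    using q by (simp add: halfspace_def)
  have min: "f 0 \<le> f m" for m
  proof (rule int_midpoint_convex_ge)
    show "2 * f n \<le> f (n + 1) + f (n - 1)" for n
      using rho_orbit_sq_strict_midpoint[OF \<open>q \<in> H2H2\<close>, of n] by (simp add: f_def)
    show "f 0 \<le> f 1" "f 0 \<le> f (- 1)"
      using q by (simp_all add: f_def halfspace_def pact_pair_zpow_0 pair_zpow_1 pair_zpow_minus_1
          flip: rho_le_iff_square_le)
  qed
  have "rho (z1, z2) q \<le> rho (z1, z2) (pact (pair_zpow (g1, g2) n) q)" for n
    using min[of "- n"] \<open>q \<in> H2H2\<close> unfolding f_def
    by (simp add: rho_orbit_swap rho_le_iff_square_le rho_commute pact_pair_zpow_0)
  with \<open>q \<in> H2H2\<close> show "q \<in> dirichlet (cyclic_group (g1, g2)) (z1, z2)"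
    by (auto simp: dirichlet_def cyclic_group_eq_range)
qed

end

theorem mainTheorem4:
  fixes g1 g2 :: mat2 and z1 z2 :: complex
  assumes "sl2 g1" "sl2 g2"
    and "hyperbolic g1" "hyperbolic g2"
    and "z1 \<in> invariant_axis g1" "z2 \<in> invariant_axis g2"
  shows "bisector (z1, z2) (pact (g1, g2) (z1, z2))
           \<inter> bisector (z1, z2) (pact (pinv (g1, g2)) (z1, z2)) = {}
     \<and> dirichlet (cyclic_group (g1, g2)) (z1, z2)
         = halfspace (z1, z2) (pact (g1, g2) (z1, z2))
           \<inter> halfspace (z1, z2) (pact (pinv (g1, g2)) (z1, z2))"
  using bisectors_disjoint[OF assms] dirichlet_cyclic_group_eq[OF assms] by blast

end
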